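(* Assume the setting in the context (one-period case $T=1$). For every $P\in\mathcal{P}$, the set $$\Theta_P:=\big\{E^R[Y]:\ R\in\mathfrak{P}(\Omega_1),\ P\ll R\lll\mathcal{P},\ Y\in L^\infty(\mathcal{F}_1;\operatorname{Int}K_1^* )\big\}\subset\mathbb{R}^d$$ is convex and has nonempty interior.
   Context: $\Omega_1$ is a Polish space, $\mathcal{F}_1$ the universal completion of its Borel $\sigma$-field, $\mathfrak{P}(\Omega_1)$ the Borel probability measures on $\Omega_1$. $\mathcal{P}\subset\mathfrak{P}(\Omega_1)$ is a nonempty convex analytic set of probability measures (weak topology). $R\lll\mathcal{P}$ means $R\ll R'$ for some $R'\in\mathcal{P}$. $K_1:\Omega_1\to2^{\mathbb{R}^d}$ is a random set whose values are closed convex cones containing $\mathbb{R}^d_+$, Borel-measurable in the sense that $\{\omega:K_1(\omega)\cap O\ne\emptyset\}$ is Borel for every closed $O\subset\mathbb{R}^d$; $K_1^*(\omega):=\{y:\langle x,y\rangle\ge0\ \forall x\in K_1(\omega)\}$, and it is assumed that $K_1^*(\omega)\cap\partial\mathbb{R}^d_+=\{0\}$ and $\operatorname{Int}K_1^*(\omega)\neq\emptyset$ for all $\omega$. $L^\infty(\mathcal{F}_1;\operatorname{Int}K_1^* )$ denotes the set of uniformly bounded $\mathcal{F}_1$-measurable $Y:\Omega_1\to\mathbb{R}^d$ with $Y(\omega)\in\operatorname{Int}K_1^*(\omega)$ for all $\omega$. *)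

theory Defs
  imports "HOL-Probability.Probability"
begin

definition prob_measures :: "('a::polish_space) measure set" where
  "prob_measures = {\<mu>. sets \<mu> = sets (borel :: 'a measure) \<and> prob_space \<mu>}"

definition weak_topology :: "('a::polish_space) measure topology" where
  "weak_topology = subtopology
     (topology_generated_by
        {{\<mu>. (\<integral>x. f x \<partial>\<mu>) \<in> U} | (f :: 'a \<Rightarrow> real) U.
            continuous_on UNIV f \<and> bounded (range f) \<and> open U})
     prob_measures"

definition baire_space :: "(nat \<Rightarrow> nat) topology" where
  "baire_space = product_topology (\<lambda>_. discrete_topology (UNIV :: nat set)) UNIV"

definition analytic_measures :: "('a::polish_space) measure set \<Rightarrow> bool" where
  "analytic_measures A \<longleftrightarrow> A \<subseteq> prob_measures \<and>
     (A = {} \<or> (\<exists>f. continuous_map baire_space weak_topology f \<and> f ` topspace baire_space = A))"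

definition mix_measure :: "real \<Rightarrow> ('a::polish_space) measure \<Rightarrow> 'a measure \<Rightarrow> 'a measure" where
  "mix_measure l \<mu> \<nu> = measure_of UNIV (sets (borel :: 'a measure))
      (\<lambda>A. ennreal l * emeasure \<mu> A + ennreal (1 - l) * emeasure \<nu> A)"

definition convex_measures :: "('a::polish_space) measure set \<Rightarrow> bool" where
  "convex_measures A \<longleftrightarrow> (\<forall>\<mu>\<in>A. \<forall>\<nu>\<in>A. \<forall>l\<in>{0..1}. mix_measure l \<mu> \<nu> \<in> A)"

text \<open>R is dominated by the family: R << R' for some R' in the family.\<close>
definition dominated_by :: "'a measure \<Rightarrow> 'a measure set \<Rightarrow> bool" where
  "dominated_by R \<P> \<longleftrightarrow> (\<exists>R'\<in>\<P>. absolutely_continuous R' R)"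

definition univ_sets :: "('a::polish_space) set set" where
  "univ_sets = (\<Inter>\<mu>\<in>prob_measures. sets (completion \<mu>))"

definition univ_measurable :: "(('a::polish_space) \<Rightarrow> 'b::topological_space) \<Rightarrow> bool" where
  "univ_measurable Y \<longleftrightarrow> (\<forall>B\<in>sets (borel :: 'b measure). Y -` B \<in> univ_sets)"

definition nonneg_orthant :: "(real ^ 'd) set" where
  "nonneg_orthant = {x. \<forall>i. 0 \<le> x $ i}"

definition dual_cone :: "(real ^ 'd) set \<Rightarrow> (real ^ 'd) set" where
  "dual_cone K = {y. \<forall>x\<in>K. 0 \<le> inner x y}"

definition borel_random_set :: "(('a::polish_space) \<Rightarrow> (real ^ 'd) set) \<Rightarrow> bool" where
  "borel_random_set K \<longleftrightarrow>
     (\<forall>C. closed C \<longrightarrow> {\<omega>. K \<omega> \<inter> C \<noteq> {}} \<in> sets (borel :: 'a measure))"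

definition Linf_int_dual :: "(('a::polish_space) \<Rightarrow> (real ^ 'd) set) \<Rightarrow> ('a \<Rightarrow> real ^ 'd) set" where
  "Linf_int_dual K = {Y. univ_measurable Y \<and> bounded (range Y) \<and>
                         (\<forall>\<omega>. Y \<omega> \<in> interior (dual_cone (K \<omega>)))}"

text \<open>The set Theta_P; E^R[Y] is the integral w.r.t. the completion of R
  (the extension of R to the universally completed sigma-field).\<close>
definition Theta :: "('a::polish_space) measure set \<Rightarrow> ('a \<Rightarrow> (real ^ 'd) set) \<Rightarrow> 'a measure
                      \<Rightarrow> (real ^ 'd) set" where
  "Theta \<P> K P = {integral\<^sup>L (completion R) Y | R Y.
      R \<in> prob_measures \<and> absolutely_continuous R P \<and> dominated_by R \<P> \<and> Y \<in> Linf_int_dual K}"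

end

theory Submission
  imports Defs
begin

text \<open>Convexity: a convex combination \<open>u E\<^sup>R\<^sup>1[Y\<^sub>1] + (1 - u) E\<^sup>R\<^sup>2[Y\<^sub>2]\<close> is \<open>E\<^sup>R[Y]\<close> for the
  mixture \<open>R = u R\<^sub>1 + (1 - u) R\<^sub>2\<close> and the selector \<open>Y = w Y\<^sub>1 + (1 - w) Y\<^sub>2\<close> with \<open>w = u dR\<^sub>1/dR\<close>;
  since \<open>Int K\<^sup>*\<close> is convex, \<open>Y\<close> is again admissible, and the mixture is dominated by the
  corresponding mixture in the convex family while still dominating \<open>P\<close>.

  Interior: Effros measurability of \<open>K\<close> makes \<open>{\<omega>. B \<subseteq> K\<^sup>*(\<omega>)}\<close> Borel for every closed
  ball \<open>B\<close>. Choosing for each \<open>\<omega>\<close> the first ball of a countable family that fits into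
  \<open>K\<^sup>*(\<omega>) \<inter> cball 0 1\<close> gives a bounded Borel selector \<open>\<omega> \<mapsto> c (N \<omega>)\<close> with a whole ball of
  room around it. Some level set \<open>A = {N = n\<^sub>0}\<close> has \<open>P(A) = p > 0\<close>, and moving the selector
  by \<open>w\<close> on \<open>A\<close> (for \<open>|w| < r n\<^sub>0\<close>) moves \<open>E\<^sup>P[Y]\<close> by \<open>p w\<close>; so \<open>Theta\<close> contains a ball.\<close>

lemma prob_measuresD:
  assumes "\<mu> \<in> prob_measures"
  shows "sets \<mu> = sets borel" and "space \<mu> = UNIV" and "prob_space \<mu>"
proof -
  show sets: "sets \<mu> = sets borel" and "prob_space \<mu>"
    using assms unfolding prob_measures_def by auto
  show "space \<mu> = UNIV"
    using sets_eq_imp_space_eq[OF sets] by simp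
qed

lemma measurable_prob_measures:
  assumes "\<mu> \<in> prob_measures"
  shows "measurable \<mu> N = measurable borel N"
  by (rule measurable_cong_sets[OF prob_measuresD(1)[OF assms] refl])

lemma univ_measurable_iff:
  "univ_measurable (Y :: 'a::polish_space \<Rightarrow> 'b::topological_space) \<longleftrightarrow>
     (\<forall>\<mu>\<in>prob_measures. Y \<in> borel_measurable (completion \<mu>))"
  unfolding univ_measurable_def univ_sets_def measurable_def
  by (auto simp: prob_measuresD(2))

lemma borel_measurable_imp_univ_measurable:
  fixes f :: "'a::polish_space \<Rightarrow> 'b::topological_space"
  assumes "f \<in> borel_measurable borel"
  shows "univ_measurable f"
  unfolding univ_measurable_iff
proof
  fix \<mu> :: "'a measure"
  assume "\<mu> \<in> prob_measures"
  then have "f \<in> borel_measurable \<mu>"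
    using assms by (simp only: measurable_prob_measures)
  then show "f \<in> borel_measurable (completion \<mu>)"
    by (rule measurable_completion)
qed

lemma completion_ex_borel_measurable_euclidean:
  fixes Y :: "'a \<Rightarrow> 'b::euclidean_space"
  assumes Y: "Y \<in> borel_measurable (completion M)"
  shows "\<exists>g\<in>borel_measurable M. AE x in M. Y x = g x"
proof -
  have "\<exists>g\<in>borel_measurable M. AE x in M. Y x \<bullet> i = g x" for i
  proof -
    have "(\<lambda>x. Y x \<bullet> i) \<in> borel_measurable (completion M)"
      using Y by measurable
    then show ?thesis
      by (rule completion_ex_borel_measurable_real)
  qed
  then obtain g where g: "\<And>i. g i \<in> borel_measurable M" "\<And>i. AE x in M. Y x \<bullet> i = g i x"
    by metis
  have "AE x in M. \<forall>i\<in>Basis. Y x \<bullet> i = g i x"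
    by (rule AE_finite_allI) (auto intro: g(2))
  then have "AE x in M. Y x = (\<Sum>i\<in>Basis. g i x *\<^sub>R i)"
  proof eventually_elim
    case (elim x)
    have "Y x = (\<Sum>i\<in>Basis. (Y x \<bullet> i) *\<^sub>R i)"
      by (rule euclidean_representation[symmetric])
    also have "\<dots> = (\<Sum>i\<in>Basis. g i x *\<^sub>R i)"
      using elim by (intro sum.cong) auto
    finally show ?case .
  qed
  moreover have "(\<lambda>x. \<Sum>i\<in>Basis. g i x *\<^sub>R i) \<in> borel_measurable M"
    using g(1) by measurable
  ultimately show ?thesis
    by (rule bexI)
qed

lemma integral_completion_AE_eq:
  fixes Y g :: "'a \<Rightarrow> 'b::{banach,second_countable_topology}"
  assumes Y: "Y \<in> borel_measurable (completion M)"
    and g: "g \<in> borel_measurable M" and ae: "AE x in M. Y x = g x"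
  shows "integral\<^sup>L (completion M) Y = integral\<^sup>L M g"
proof -
  have "integral\<^sup>L (completion M) Y = integral\<^sup>L (completion M) g"
    by (rule integral_cong_AE[OF Y measurable_completion[OF g] AE_completion[OF ae]])
  also have "\<dots> = integral\<^sup>L M g"
    by (rule integral_completion[OF g])
  finally show ?thesis .
qed

lemma sets_mix_measure [simp]: "sets (mix_measure l \<mu> \<nu>) = sets (borel :: 'a::polish_space measure)"
  unfolding mix_measure_def by (metis sets.sets_measure_of_eq space_borel)

lemma emeasure_mix_measure:
  assumes "\<mu> \<in> prob_measures" "\<nu> \<in> prob_measures" and A: "A \<in> sets (borel :: 'a::polish_space measure)"
  shows "emeasure (mix_measure l \<mu> \<nu>) A = ennreal l * emeasure \<mu> A + ennreal (1 - l) * emeasure \<nu> A"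
  unfolding mix_measure_def
proof (rule emeasure_measure_of_sigma[OF _ _ _ A])
  show "sigma_algebra UNIV (sets (borel :: 'a measure))"
    by (metis sets.sigma_algebra_axioms space_borel)
  show "positive (sets borel) (\<lambda>A. ennreal l * emeasure \<mu> A + ennreal (1 - l) * emeasure \<nu> A)"
    unfolding positive_def by simp
  show "countably_additive (sets borel) (\<lambda>A. ennreal l * emeasure \<mu> A + ennreal (1 - l) * emeasure \<nu> A)"
    unfolding countably_additive_def
  proof (intro allI impI)
    fix F :: "nat \<Rightarrow> 'a set"
    assume F: "range F \<subseteq> sets borel" "disjoint_family F" "\<Union> (range F) \<in> sets borel"
    have "(\<Sum>i. ennreal l * emeasure \<mu> (F i) + ennreal (1 - l) * emeasure \<nu> (F i))
        = (\<Sum>i. ennreal l * emeasure \<mu> (F i)) + (\<Sum>i. ennreal (1 - l) * emeasure \<nu> (F i))"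
      by (rule suminf_add[symmetric]) auto
    also have "\<dots> = ennreal l * (\<Sum>i. emeasure \<mu> (F i)) + ennreal (1 - l) * (\<Sum>i. emeasure \<nu> (F i))"
      by (simp add: ennreal_suminf_cmult)
    also have "\<dots> = ennreal l * emeasure \<mu> (\<Union> (range F)) + ennreal (1 - l) * emeasure \<nu> (\<Union> (range F))"
      using F prob_measuresD(1)[OF assms(1)] prob_measuresD(1)[OF assms(2)] by (simp add: suminf_emeasure)
    finally show "(\<Sum>i. ennreal l * emeasure \<mu> (F i) + ennreal (1 - l) * emeasure \<nu> (F i)) =
         ennreal l * emeasure \<mu> (\<Union> (range F)) + ennreal (1 - l) * emeasure \<nu> (\<Union> (range F))" .
  qed
qed

lemma mix_measure_in_prob_measures:
  assumes "\<mu> \<in> prob_measures" "\<nu> \<in> prob_measures" and "0 \<le> l" "l \<le> 1"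
  shows "mix_measure l \<mu> \<nu> \<in> prob_measures"
proof -
  have "emeasure (mix_measure l \<mu> \<nu>) UNIV = ennreal l * emeasure \<mu> UNIV + ennreal (1 - l) * emeasure \<nu> UNIV"
    by (rule emeasure_mix_measure[OF assms(1,2) borel_open[OF open_UNIV]])
  moreover have "emeasure \<mu> UNIV = 1" "emeasure \<nu> UNIV = 1"
    using prob_space.emeasure_space_1[OF prob_measuresD(3)[OF assms(1)]]
      prob_space.emeasure_space_1[OF prob_measuresD(3)[OF assms(2)]]
    by (simp_all add: prob_measuresD(2) assms)
  ultimately have "emeasure (mix_measure l \<mu> \<nu>) UNIV = 1"
    using assms by (simp add: ennreal_plus[symmetric] del: ennreal_plus)
  then have "prob_space (mix_measure l \<mu> \<nu>)"
    by (intro prob_spaceI) (metis sets_mix_measure sets_eq_imp_space_eq space_borel)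
  then show ?thesis
    unfolding prob_measures_def by simp
qed

lemma null_sets_mix_measure:
  assumes "\<mu> \<in> prob_measures" "\<nu> \<in> prob_measures" and "0 < l" "l < 1"
  shows "null_sets (mix_measure l \<mu> \<nu>) = null_sets \<mu> \<inter> null_sets \<nu>"
  using assms emeasure_mix_measure[OF assms(1,2)]
  by (auto simp: null_sets_def prob_measuresD(1))

lemma real_density_of_absolutely_continuous:
  assumes R: "R \<in> prob_measures" and Q: "Q \<in> prob_measures" and ac: "absolutely_continuous R Q"
  obtains h :: "'a::polish_space \<Rightarrow> real"
  where "h \<in> borel_measurable borel" "\<And>x. 0 \<le> h x" "density R (\<lambda>x. ennreal (h x)) = Q"
proof -
  interpret R: prob_space R using prob_measuresD(3)[OF R] .
  interpret Q: prob_space Q using prob_measuresD(3)[OF Q] .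
  have sets: "sets Q = sets R" using R Q by (simp add: prob_measuresD(1))
  obtain h where h: "h \<in> borel_measurable R" "AE x in R. RN_deriv R Q x = ennreal (h x)"
    "AE x in Q. 0 < h x" "\<And>x. 0 \<le> h x"
    using R.real_RN_deriv[OF Q.finite_measure_axioms ac sets] by blast
  have "density R (\<lambda>x. ennreal (h x)) = density R (RN_deriv R Q)"
    using h(1,2) by (intro density_cong) auto
  also have "\<dots> = Q"
    by (rule R.density_RN_deriv[OF ac sets])
  finally have "density R (\<lambda>x. ennreal (h x)) = Q" .
  moreover have "h \<in> borel_measurable borel"
    using h(1) by (simp only: measurable_prob_measures[OF R])
  ultimately show ?thesis
    using h(4) that by blast
qed

lemma univ_measurable_AE_eq_borel:
  fixes Y :: "'a::polish_space \<Rightarrow> 'b::euclidean_space"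
  assumes R: "R \<in> prob_measures" and Y: "univ_measurable Y"
  obtains g where "g \<in> borel_measurable borel" "AE x in R. Y x = g x"
proof -
  have "Y \<in> borel_measurable (completion R)"
    using Y R univ_measurable_iff by blast
  from completion_ex_borel_measurable_euclidean[OF this] that show thesis
    by (auto simp: measurable_prob_measures[OF R])
qed

lemma mix_measure_densities:
  fixes R1 R2 :: "'a::polish_space measure"
  assumes R1: "R1 \<in> prob_measures" and R2: "R2 \<in> prob_measures" and u: "0 < u" "u < 1"
  obtains h1 h2 :: "'a \<Rightarrow> real"
  where "h1 \<in> borel_measurable borel" "h2 \<in> borel_measurable borel"
    "\<And>x. 0 \<le> h1 x" "\<And>x. 0 \<le> h2 x"
    "density (mix_measure u R1 R2) (\<lambda>x. ennreal (h1 x)) = R1"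
    "density (mix_measure u R1 R2) (\<lambda>x. ennreal (h2 x)) = R2"
    "AE x in mix_measure u R1 R2. u * h1 x + (1 - u) * h2 x = 1"
proof -
  define R where "R = mix_measure u R1 R2"
  have R: "R \<in> prob_measures"
    unfolding R_def using mix_measure_in_prob_measures[OF R1 R2] u by simp
  interpret R: prob_space R using prob_measuresD(3)[OF R] .
  have "absolutely_continuous R R1" "absolutely_continuous R R2"
    using null_sets_mix_measure[OF R1 R2 u] unfolding absolutely_continuous_def R_def by auto
  then obtain h1 h2 where
    h1: "h1 \<in> borel_measurable borel" "\<And>x. 0 \<le> h1 x" "density R (\<lambda>x. ennreal (h1 x)) = R1" and
    h2: "h2 \<in> borel_measurable borel" "\<And>x. 0 \<le> h2 x" "density R (\<lambda>x. ennreal (h2 x)) = R2"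
    using real_density_of_absolutely_continuous[OF R R1] real_density_of_absolutely_continuous[OF R R2]
    by metis
  have [measurable]: "h1 \<in> borel_measurable R" "h2 \<in> borel_measurable R"
    using h1(1) h2(1) by (simp_all only: measurable_prob_measures[OF R])
  have "density R (\<lambda>x. ennreal (u * h1 x + (1 - u) * h2 x)) = density R (\<lambda>x. ennreal 1)"
  proof (rule measure_eqI)
    fix A
    assume "A \<in> sets (density R (\<lambda>x. ennreal (u * h1 x + (1 - u) * h2 x)))"
    then have A [measurable]: "A \<in> sets R" by simp
    have "emeasure (density R (\<lambda>x. ennreal (u * h1 x + (1 - u) * h2 x))) A
        = (\<integral>\<^sup>+x. ennreal u * (ennreal (h1 x) * indicator A x)
                + ennreal (1 - u) * (ennreal (h2 x) * indicator A x) \<partial>R)"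
      using u h1(2) h2(2)
      by (auto simp: emeasure_density ennreal_plus ennreal_mult intro!: nn_integral_cong
          split: split_indicator)
    also have "\<dots> = ennreal u * emeasure R1 A + ennreal (1 - u) * emeasure R2 A"
      by (simp add: nn_integral_add nn_integral_cmult flip: h1(3) h2(3) emeasure_density)
    also have "\<dots> = emeasure (density R (\<lambda>x. ennreal 1)) A"
      using A R1 R2 by (simp add: density_1 R_def emeasure_mix_measure prob_measuresD(1))
    finally show "emeasure (density R (\<lambda>x. ennreal (u * h1 x + (1 - u) * h2 x))) A
        = emeasure (density R (\<lambda>x. ennreal 1)) A" .
  qed simp
  then have "AE x in R. ennreal (u * h1 x + (1 - u) * h2 x) = ennreal 1"
    by (subst (asm) R.density_unique_iff) auto
  then have "AE x in R. u * h1 x + (1 - u) * h2 x = 1"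
  proof eventually_elim
    case (elim x)
    moreover have "0 \<le> u * h1 x + (1 - u) * h2 x"
      using u h1(2)[of x] h2(2)[of x] by simp
    ultimately show ?case
      by simp
  qed
  with h1 h2 that show thesis
    unfolding R_def by blast
qed

lemma convex_dual_cone: "convex (dual_cone C)"
  unfolding convex_def dual_cone_def
  by (auto simp: inner_add_right intro!: add_nonneg_nonneg mult_nonneg_nonneg)

lemma Linf_int_dual_convex_combination:
  fixes K :: "'a::polish_space \<Rightarrow> (real ^ 'd) set"
  assumes Y1: "Y1 \<in> Linf_int_dual K" and Y2: "Y2 \<in> Linf_int_dual K"
    and w: "w \<in> borel_measurable borel" "\<And>x. 0 \<le> w x" "\<And>x. w x \<le> 1"
  shows "(\<lambda>x. w x *\<^sub>R Y1 x + (1 - w x) *\<^sub>R Y2 x) \<in> Linf_int_dual K"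
proof -
  obtain B1 B2 where B1: "\<And>x. norm (Y1 x) \<le> B1" and B2: "\<And>x. norm (Y2 x) \<le> B2"
    using Y1 Y2 unfolding Linf_int_dual_def bounded_iff by blast
  have "norm (w x *\<^sub>R Y1 x + (1 - w x) *\<^sub>R Y2 x) \<le> B1 + B2" for x
  proof -
    have "norm (w x *\<^sub>R Y1 x + (1 - w x) *\<^sub>R Y2 x) \<le> w x * norm (Y1 x) + (1 - w x) * norm (Y2 x)"
      using w(2,3)[of x] by (metis abs_of_nonneg diff_ge_0_iff_ge norm_scaleR norm_triangle_ineq)
    also have "\<dots> \<le> norm (Y1 x) + norm (Y2 x)"
      using w(2,3)[of x] by (intro add_mono mult_left_le_one_le) auto
    finally show ?thesis
      using B1[of x] B2[of x] by linarith
  qed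
  then have "bounded (range (\<lambda>x. w x *\<^sub>R Y1 x + (1 - w x) *\<^sub>R Y2 x))"
    unfolding bounded_iff by blast
  moreover have "univ_measurable (\<lambda>x. w x *\<^sub>R Y1 x + (1 - w x) *\<^sub>R Y2 x)"
    unfolding univ_measurable_iff
  proof
    fix \<mu> :: "'a measure"
    assume \<mu>: "\<mu> \<in> prob_measures"
    have [measurable]: "w \<in> borel_measurable (completion \<mu>)"
      using w(1) by (intro measurable_completion) (simp only: measurable_prob_measures[OF \<mu>])
    have [measurable]: "Y1 \<in> borel_measurable (completion \<mu>)" "Y2 \<in> borel_measurable (completion \<mu>)"
      using Y1 Y2 \<mu> unfolding Linf_int_dual_def univ_measurable_iff by blast+
    show "(\<lambda>x. w x *\<^sub>R Y1 x + (1 - w x) *\<^sub>R Y2 x) \<in> borel_measurable (completion \<mu>)"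
      by measurable
  qed
  moreover have "w x *\<^sub>R Y1 x + (1 - w x) *\<^sub>R Y2 x \<in> interior (dual_cone (K x))" for x
    using Y1 Y2 w(2,3)[of x] unfolding Linf_int_dual_def
    by (intro convexD[OF convex_interior[OF convex_dual_cone]]) auto
  ultimately show ?thesis
    unfolding Linf_int_dual_def by blast
qed

lemma integral_completion_density:
  fixes Y g :: "'a::polish_space \<Rightarrow> 'b::euclidean_space"
  assumes R: "R \<in> prob_measures" and Q: "Q \<in> prob_measures"
    and h: "h \<in> borel_measurable borel" "\<And>x. 0 \<le> h x" "density R (\<lambda>x. ennreal (h x)) = Q"
    and Y: "univ_measurable Y" "bounded (range Y)"
    and g: "g \<in> borel_measurable borel" "AE x in R. Y x = g x"
  shows "integrable R (\<lambda>x. h x *\<^sub>R g x)"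
    and "integral\<^sup>L (completion Q) Y = integral\<^sup>L R (\<lambda>x. h x *\<^sub>R g x)"
proof -
  interpret Q: prob_space Q using prob_measuresD(3)[OF Q] .
  have [measurable]: "h \<in> borel_measurable R" "g \<in> borel_measurable R"
    using h(1) g(1) by (simp_all only: measurable_prob_measures[OF R])
  have gQ: "g \<in> borel_measurable Q"
    using g(1) by (simp only: measurable_prob_measures[OF Q])
  have YgQ: "AE x in Q. Y x = g x"
    using g(2) unfolding h(3)[symmetric] by (subst AE_density) auto
  obtain B where B: "\<And>x. norm (Y x) \<le> B"
    using Y(2) unfolding bounded_iff by blast
  have "AE x in Q. norm (g x) \<le> B"
    using YgQ
  proof eventually_elim
    case (elim x)
    then show ?case
      using B[of x] by simp
  qed
  then have "integrable Q g"
    using gQ by (rule Q.integrable_const_bound)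
  then show "integrable R (\<lambda>x. h x *\<^sub>R g x)"
    unfolding h(3)[symmetric] using h(2) by (subst (asm) integrable_density) auto
  have "integral\<^sup>L (completion Q) Y = integral\<^sup>L Q g"
    using Y(1) Q gQ YgQ by (intro integral_completion_AE_eq) (auto simp: univ_measurable_iff)
  also have "\<dots> = integral\<^sup>L R (\<lambda>x. h x *\<^sub>R g x)"
    unfolding h(3)[symmetric] using h(2) by (intro integral_density) auto
  finally show "integral\<^sup>L (completion Q) Y = integral\<^sup>L R (\<lambda>x. h x *\<^sub>R g x)" .
qed

lemma Linf_int_dual_mix_integral:
  fixes K :: "'a::polish_space \<Rightarrow> (real ^ 'd) set"
  assumes R1: "R1 \<in> prob_measures" and R2: "R2 \<in> prob_measures"
    and Y1: "Y1 \<in> Linf_int_dual K" and Y2: "Y2 \<in> Linf_int_dual K" and u: "0 < u" "u < 1"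
  obtains Y where "Y \<in> Linf_int_dual K"
    "integral\<^sup>L (completion (mix_measure u R1 R2)) Y
       = u *\<^sub>R integral\<^sup>L (completion R1) Y1 + (1 - u) *\<^sub>R integral\<^sup>L (completion R2) Y2"
proof -
  define R where "R = mix_measure u R1 R2"
  have R: "R \<in> prob_measures"
    unfolding R_def using mix_measure_in_prob_measures[OF R1 R2] u by simp
  obtain h1 h2 :: "'a \<Rightarrow> real" where h: "h1 \<in> borel_measurable borel" "h2 \<in> borel_measurable borel"
    "\<And>x. 0 \<le> h1 x" "\<And>x. 0 \<le> h2 x"
    "density R (\<lambda>x. ennreal (h1 x)) = R1" "density R (\<lambda>x. ennreal (h2 x)) = R2"
    and h_sum: "AE x in R. u * h1 x + (1 - u) * h2 x = 1"
    by (erule mix_measure_densities[OF R1 R2 u, folded R_def])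
  note h1 = h(1,3,5) and h2 = h(2,4,6)
  have Y1': "univ_measurable Y1" "bounded (range Y1)" and Y2': "univ_measurable Y2" "bounded (range Y2)"
    using Y1 Y2 unfolding Linf_int_dual_def by auto
  obtain g1 where g1: "g1 \<in> borel_measurable borel" "AE x in R. Y1 x = g1 x"
    using univ_measurable_AE_eq_borel[OF R Y1'(1)] .
  obtain g2 where g2: "g2 \<in> borel_measurable borel" "AE x in R. Y2 x = g2 x"
    using univ_measurable_AE_eq_borel[OF R Y2'(1)] .
  note I1 = integral_completion_density[OF R R1 h1 Y1' g1]
  note I2 = integral_completion_density[OF R R2 h2 Y2' g2]
  \<comment> \<open>the weight is \<open>u dR1/dR\<close>, patched on the \<open>R\<close>-null set where the densities misbehave\<close>
  define w where "w x = (if u * h1 x + (1 - u) * h2 x = 1 then u * h1 x else 1)" for x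
  have w: "w \<in> borel_measurable borel" "\<And>x. 0 \<le> w x" "\<And>x. w x \<le> 1"
    using h1 h2 u unfolding w_def by (auto intro: mult_nonneg_nonneg) (smt (verit) mult_nonneg_nonneg)
  define Y where "Y x = w x *\<^sub>R Y1 x + (1 - w x) *\<^sub>R Y2 x" for x
  have Y: "Y \<in> Linf_int_dual K"
    unfolding Y_def by (rule Linf_int_dual_convex_combination[OF Y1 Y2 w])
  have [measurable]: "h1 \<in> borel_measurable R" "h2 \<in> borel_measurable R"
    "g1 \<in> borel_measurable R" "g2 \<in> borel_measurable R"
    using h1(1) h2(1) g1(1) g2(1) by (simp_all only: measurable_prob_measures[OF R])
  have "integral\<^sup>L (completion R) Y
      = integral\<^sup>L R (\<lambda>x. u *\<^sub>R (h1 x *\<^sub>R g1 x) + (1 - u) *\<^sub>R (h2 x *\<^sub>R g2 x))"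
  proof (rule integral_completion_AE_eq)
    show "Y \<in> borel_measurable (completion R)"
      using Y R unfolding Linf_int_dual_def univ_measurable_iff by blast
    show "(\<lambda>x. u *\<^sub>R (h1 x *\<^sub>R g1 x) + (1 - u) *\<^sub>R (h2 x *\<^sub>R g2 x)) \<in> borel_measurable R"
      by measurable
    show "AE x in R. Y x = u *\<^sub>R (h1 x *\<^sub>R g1 x) + (1 - u) *\<^sub>R (h2 x *\<^sub>R g2 x)"
      using h_sum g1(2) g2(2)
    proof eventually_elim
      case (elim x)
      then have "w x = u * h1 x" "1 - w x = (1 - u) * h2 x"
        unfolding w_def by auto
      then show ?case
        using elim unfolding Y_def by simp
    qed
  qed
  also have "\<dots> = u *\<^sub>R integral\<^sup>L R (\<lambda>x. h1 x *\<^sub>R g1 x) + (1 - u) *\<^sub>R integral\<^sup>L R (\<lambda>x. h2 x *\<^sub>R g2 x)"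
    by (simp only: Bochner_Integration.integral_add[OF integrable_scaleR_right[OF I1(1)]
          integrable_scaleR_right[OF I2(1)]] Bochner_Integration.integral_scaleR_right)
  finally show thesis
    using that Y I1(2) I2(2) unfolding R_def by simp
qed

lemma ThetaI:
  assumes "R \<in> prob_measures" "absolutely_continuous R P" "dominated_by R \<P>" "Y \<in> Linf_int_dual K"
  shows "integral\<^sup>L (completion R) Y \<in> Theta \<P> K P"
  using assms unfolding Theta_def by blast

lemma Theta_convex:
  assumes convex: "convex_measures \<P>" and prob: "\<P> \<subseteq> prob_measures"
  shows "convex (Theta \<P> K P)"
proof (rule convexI)
  fix x y and u v :: real
  assume x: "x \<in> Theta \<P> K P" and y: "y \<in> Theta \<P> K P" and "0 \<le> u" "0 \<le> v" "u + v = 1"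
  show "u *\<^sub>R x + v *\<^sub>R y \<in> Theta \<P> K P"
  proof (cases "u = 0 \<or> v = 0")
    case True
    then show ?thesis
      using x y \<open>u + v = 1\<close> by auto
  next
    case False
    then have u: "0 < u" "u < 1" and v: "v = 1 - u"
      using \<open>0 \<le> u\<close> \<open>0 \<le> v\<close> \<open>u + v = 1\<close> by auto
    obtain R1 Y1 where R1: "R1 \<in> prob_measures" "absolutely_continuous R1 P" "dominated_by R1 \<P>"
      and Y1: "Y1 \<in> Linf_int_dual K" and x_eq: "x = integral\<^sup>L (completion R1) Y1"
      using x unfolding Theta_def by blast
    obtain R2 Y2 where R2: "R2 \<in> prob_measures" "absolutely_continuous R2 P" "dominated_by R2 \<P>"
      and Y2: "Y2 \<in> Linf_int_dual K" and y_eq: "y = integral\<^sup>L (completion R2) Y2"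
      using y unfolding Theta_def by blast
    obtain Y where Y: "Y \<in> Linf_int_dual K"
      and Y_int: "integral\<^sup>L (completion (mix_measure u R1 R2)) Y = u *\<^sub>R x + v *\<^sub>R y"
      using Linf_int_dual_mix_integral[OF R1(1) R2(1) Y1 Y2 u] x_eq y_eq v by metis
    obtain R1' R2' where R': "R1' \<in> \<P>" "R2' \<in> \<P>"
      and "absolutely_continuous R1' R1" "absolutely_continuous R2' R2"
      using R1(3) R2(3) unfolding dominated_by_def by blast
    moreover have "R1' \<in> prob_measures" "R2' \<in> prob_measures"
      using R' prob by auto
    ultimately have "absolutely_continuous (mix_measure u R1' R2') (mix_measure u R1 R2)"
      using null_sets_mix_measure[OF R1(1) R2(1) u] null_sets_mix_measure[of R1' R2' u] u
      unfolding absolutely_continuous_def by auto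
    moreover have "mix_measure u R1' R2' \<in> \<P>"
      using convex R' u unfolding convex_measures_def by auto
    ultimately have "dominated_by (mix_measure u R1 R2) \<P>"
      unfolding dominated_by_def by blast
    moreover have "absolutely_continuous (mix_measure u R1 R2) P"
      using R1(2) R2(2) null_sets_mix_measure[OF R1(1) R2(1) u]
      unfolding absolutely_continuous_def by blast
    moreover have "mix_measure u R1 R2 \<in> prob_measures"
      using mix_measure_in_prob_measures[OF R1(1) R2(1)] u by simp
    ultimately have "integral\<^sup>L (completion (mix_measure u R1 R2)) Y \<in> Theta \<P> K P"
      using Y by (intro ThetaI)
    then show ?thesis
      using Y_int by simp
  qed
qed

lemma countable_cballs_in_open:
  obtains c :: "nat \<Rightarrow> 'a::{metric_space,second_countable_topology}" and r :: "nat \<Rightarrow> real"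
  where "\<And>U. open U \<Longrightarrow> U \<noteq> {} \<Longrightarrow> \<exists>n. cball (c n) (r n) \<subseteq> U" "\<And>n. 0 < r n"
proof -
  obtain D :: "'a set" where "countable D" and D: "\<And>X. open X \<Longrightarrow> X \<noteq> {} \<Longrightarrow> \<exists>d\<in>D. d \<in> X"
    by (erule countable_dense_setE)
  define S where "S = D \<times> (UNIV :: nat set)"
  have S: "countable S" "S \<noteq> {}"
    using \<open>countable D\<close> D[of UNIV] unfolding S_def by auto
  define c where "c n = fst (from_nat_into S n)" for n
  define r where "r n = 1 / Suc (snd (from_nat_into S n))" for n
  show thesis
  proof (rule that)
    fix U :: "'a set"
    assume "open U" "U \<noteq> {}"
    then obtain z e where "e > 0" "ball z e \<subseteq> U"
      by (meson all_not_in_conv open_contains_ball)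
    obtain m where m: "1 / Suc m < e / 2"
      using \<open>e > 0\<close> by (metis half_gt_zero nat_approx_posE)
    obtain d where d: "d \<in> D" "dist z d < e / 2"
      using D[of "ball z (e / 2)"] \<open>e > 0\<close> by auto
    obtain n where n: "from_nat_into S n = (d, m)"
      using from_nat_into_surj[OF S(1), of "(d, m)"] d(1) unfolding S_def by auto
    have "cball (c n) (r n) \<subseteq> ball z e"
    proof
      fix y
      assume "y \<in> cball (c n) (r n)"
      then have "dist d y < e / 2"
        using m n by (simp add: c_def r_def)
      then show "y \<in> ball z e"
        using d(2) dist_triangle[of z y d] by simp
    qed
    with \<open>ball z e \<subseteq> U\<close> show "\<exists>n. cball (c n) (r n) \<subseteq> U"
      by blast
  next
    show "0 < r n" for n
      by (simp add: r_def)
  qed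
qed

lemma borel_random_set_open:
  fixes K :: "'a::polish_space \<Rightarrow> (real ^ 'd) set"
  assumes K: "borel_random_set K" and U: "open U"
  shows "{\<omega>. K \<omega> \<inter> U \<noteq> {}} \<in> sets borel"
proof -
  have "fsigma_in euclidean U"
    using U by (intro open_imp_fsigma_in metrizable_space_euclidean) simp
  then obtain C where C: "\<forall>n. closedin euclidean (C n)" "\<forall>n. C n \<subseteq> C (Suc n)" "\<Union> (range C) = U"
    unfolding fsigma_in_ascending by blast
  then have "{\<omega>. K \<omega> \<inter> U \<noteq> {}} = (\<Union>n. {\<omega>. K \<omega> \<inter> C n \<noteq> {}})"
    by auto
  also have "\<dots> \<in> sets borel"
    using K C(1) unfolding borel_random_set_def by (intro sets.countable_UN'') auto
  finally show ?thesis .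
qed

lemma scaleR_mem_dual_cone:
  assumes "y \<in> dual_cone C" "0 \<le> a"
  shows "a *\<^sub>R y \<in> dual_cone C"
  using assms unfolding dual_cone_def by auto

lemma cball_subset_dual_cone_iff:
  fixes q :: "real ^ 'd"
  assumes r: "r > 0"
  shows "cball q r \<subseteq> dual_cone C \<longleftrightarrow> C \<inter> {x. inner x q < r * norm x} = {}"
proof
  assume h: "cball q r \<subseteq> dual_cone C"
  show "C \<inter> {x. inner x q < r * norm x} = {}"
  proof (rule ccontr)
    assume "C \<inter> {x. inner x q < r * norm x} \<noteq> {}"
    then obtain x where x: "x \<in> C" "inner x q < r * norm x" by auto
    then have "x \<noteq> 0" by auto
    \<comment> \<open>the point of the ball minimising \<open>inner x\<close>\<close>
    define y where "y = q - (r / norm x) *\<^sub>R x"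
    have "dist q y = r"
      using \<open>x \<noteq> 0\<close> r by (simp add: y_def dist_norm)
    then have "0 \<le> inner x y"
      using h x(1) unfolding dual_cone_def by auto
    moreover have "inner x y = inner x q - r * norm x"
      using \<open>x \<noteq> 0\<close> by (simp add: y_def inner_diff_right power2_norm_eq_inner[symmetric] power2_eq_square)
    ultimately show False
      using x(2) by simp
  qed
next
  assume h: "C \<inter> {x. inner x q < r * norm x} = {}"
  show "cball q r \<subseteq> dual_cone C"
    unfolding dual_cone_def
  proof safe
    fix y x
    assume y: "y \<in> cball q r" and x: "x \<in> C"
    have "\<bar>inner x (y - q)\<bar> \<le> norm x * norm (y - q)"
      by (rule Cauchy_Schwarz_ineq2)
    also have "\<dots> \<le> norm x * r"
      using y by (intro mult_left_mono) (auto simp: dist_norm norm_minus_commute)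
    finally have "inner x (y - q) \<ge> - (r * norm x)"
      by (simp add: mult.commute)
    moreover have "inner x q \<ge> r * norm x"
      using h x by auto
    ultimately show "0 \<le> inner x y"
      by (simp add: inner_diff_right)
  qed
qed

lemma sets_cball_subset_dual_cone:
  fixes K :: "'a::polish_space \<Rightarrow> (real ^ 'd) set"
  assumes K: "borel_random_set K" and r: "r > 0"
  shows "{\<omega>. cball q r \<subseteq> dual_cone (K \<omega>)} \<in> sets borel"
proof -
  have "open {x :: real ^ 'd. inner x q < r * norm x}"
    by (rule open_Collect_less; intro continuous_intros)
  then have "UNIV - {\<omega>. K \<omega> \<inter> {x. inner x q < r * norm x} \<noteq> {}} \<in> sets borel"
    using sets.compl_sets[OF borel_random_set_open[OF K]] by simp
  moreover have "{\<omega>. cball q r \<subseteq> dual_cone (K \<omega>)}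
      = UNIV - {\<omega>. K \<omega> \<inter> {x. inner x q < r * norm x} \<noteq> {}}"
    using cball_subset_dual_cone_iff[OF r] by blast
  ultimately show ?thesis
    by simp
qed

lemma interior_dual_cone_meets_unit_ball:
  assumes "interior (dual_cone C) \<noteq> {}"
  shows "interior (dual_cone C) \<inter> ball 0 1 \<noteq> {}"
proof -
  obtain z where z: "z \<in> interior (dual_cone C)"
    using assms by blast
  define s where "s = 1 / (1 + norm z)"
  have "0 < s"
    by (simp add: s_def add_pos_nonneg)
  have "norm (s *\<^sub>R z) = norm z / (1 + norm z)"
    by (simp add: s_def)
  also have "\<dots> < 1"
    using divide_less_eq_1_pos[of "1 + norm z" "norm z"] by (simp add: add_pos_nonneg)
  finally have "norm (s *\<^sub>R z) < 1" .
  have "open ((*\<^sub>R) s ` interior (dual_cone C))"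
    using \<open>0 < s\<close> by (intro open_scaling) auto
  moreover have "(*\<^sub>R) s ` interior (dual_cone C) \<subseteq> dual_cone C"
    using interior_subset[of "dual_cone C"] \<open>0 < s\<close> by (auto intro!: scaleR_mem_dual_cone)
  ultimately have "s *\<^sub>R z \<in> interior (dual_cone C)"
    using z by (auto dest: interior_maximal)
  with \<open>norm (s *\<^sub>R z) < 1\<close> show ?thesis
    by auto
qed

lemma dual_cone_ball_selector:
  fixes K :: "'a::polish_space \<Rightarrow> (real ^ 'd) set"
  assumes K: "borel_random_set K" and int: "\<And>\<omega>. interior (dual_cone (K \<omega>)) \<noteq> {}"
  obtains N :: "'a \<Rightarrow> nat" and c :: "nat \<Rightarrow> real ^ 'd" and r :: "nat \<Rightarrow> real"
  where "N \<in> borel \<rightarrow>\<^sub>M count_space UNIV"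
    "\<And>\<omega>. cball (c (N \<omega>)) (r (N \<omega>)) \<subseteq> dual_cone (K \<omega>) \<inter> cball 0 1" "\<And>n. 0 < r n"
proof -
  obtain c :: "nat \<Rightarrow> real ^ 'd" and r :: "nat \<Rightarrow> real"
    where c: "\<And>U. open U \<Longrightarrow> U \<noteq> {} \<Longrightarrow> \<exists>n. cball (c n) (r n) \<subseteq> U" and r: "\<And>n. 0 < r n"
    by (erule countable_cballs_in_open)
  define B where "B n = {\<omega>. cball (c n) (r n) \<subseteq> dual_cone (K \<omega>) \<inter> cball 0 1}" for n
  have B: "\<exists>n. \<omega> \<in> B n" for \<omega>
  proof -
    obtain n where "cball (c n) (r n) \<subseteq> interior (dual_cone (K \<omega>)) \<inter> ball 0 1"
      using c[of "interior (dual_cone (K \<omega>)) \<inter> ball 0 1"] interior_dual_cone_meets_unit_ball[OF int]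
      by blast
    then have "\<omega> \<in> B n"
      using interior_subset[of "dual_cone (K \<omega>)"] ball_subset_cball[of 0 1]
      unfolding B_def by blast
    then show ?thesis ..
  qed
  have "Measurable.pred borel (\<lambda>\<omega>. \<omega> \<in> B n)" for n
  proof (cases "cball (c n) (r n) \<subseteq> cball 0 1")
    case True
    then have "B n = {\<omega>. cball (c n) (r n) \<subseteq> dual_cone (K \<omega>)}"
      unfolding B_def by blast
    then show ?thesis
      using sets_cball_subset_dual_cone[OF K r] by (simp add: pred_def)
  next
    case False
    then have "B n = {}"
      unfolding B_def by blast
    then show ?thesis
      by simp
  qed
  then have "(\<lambda>\<omega>. LEAST n. \<omega> \<in> B n) \<in> borel \<rightarrow>\<^sub>M count_space UNIV"
    by (rule measurable_Least)
  moreover have "\<omega> \<in> B (LEAST n. \<omega> \<in> B n)" for \<omega>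
    using B by (rule LeastI_ex)
  ultimately show thesis
    using that[of "\<lambda>\<omega>. LEAST n. \<omega> \<in> B n" c r] r unfolding B_def by blast
qed

lemma (in prob_space) ex_level_set_not_null:
  fixes N :: "'a \<Rightarrow> nat"
  shows "\<exists>n. {x \<in> space M. N x = n} \<notin> null_sets M"
proof (rule ccontr)
  assume "\<nexists>n. {x \<in> space M. N x = n} \<notin> null_sets M"
  then have "(\<Union>n. {x \<in> space M. N x = n}) \<in> null_sets M"
    by blast
  moreover have "(\<Union>n. {x \<in> space M. N x = n}) = space M"
    by auto
  ultimately show False
    using emeasure_space_1 by (simp add: null_sets_def)
qed

lemma Theta_interior_nonempty:
  fixes K :: "'a::polish_space \<Rightarrow> (real ^ 'd) set"
  assumes P: "P \<in> \<P>" and prob: "\<P> \<subseteq> prob_measures" and K: "borel_random_set K"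
    and int: "\<And>\<omega>. interior (dual_cone (K \<omega>)) \<noteq> {}"
  shows "interior (Theta \<P> K P) \<noteq> {}"
proof -
  have P_prob: "P \<in> prob_measures"
    using P prob by (rule subsetD[rotated])
  interpret P: prob_space P
    using prob_measuresD(3)[OF P_prob] .
  have P_ac: "absolutely_continuous P P"
    by (simp add: absolutely_continuous_def)
  then have P_dom: "dominated_by P \<P>"
    using P unfolding dominated_by_def by blast
  obtain N :: "'a \<Rightarrow> nat" and c :: "nat \<Rightarrow> real ^ 'd" and r :: "nat \<Rightarrow> real"
    where N: "N \<in> borel \<rightarrow>\<^sub>M count_space UNIV"
      and c: "\<And>\<omega>. cball (c (N \<omega>)) (r (N \<omega>)) \<subseteq> dual_cone (K \<omega>) \<inter> cball 0 1"
      and r: "\<And>n. 0 < r n"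
    by (erule dual_cone_ball_selector[OF K int])
  have N_P [measurable]: "N \<in> P \<rightarrow>\<^sub>M count_space UNIV"
    using N by (simp only: measurable_prob_measures[OF P_prob])
  obtain n0 where n0: "{\<omega> \<in> space P. N \<omega> = n0} \<notin> null_sets P"
    using P.ex_level_set_not_null by blast
  \<comment> \<open>on \<open>A\<close> the selector is constant, so there it can be moved freely within a ball of radius \<open>r n0\<close>\<close>
  define A where "A = {\<omega> \<in> space P. N \<omega> = n0}"
  have A [measurable]: "A \<in> sets P"
    unfolding A_def by measurable
  define p where "p = measure P A"
  have "emeasure P A \<noteq> 0"
    using n0 A unfolding A_def by (simp add: null_sets_def)
  then have "p > 0"
    unfolding p_def by (simp add: P.emeasure_eq_measure zero_less_measure_iff)
  have c_norm: "norm (c (N \<omega>)) \<le> 1" for \<omega>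
  proof -
    have "c (N \<omega>) \<in> cball (c (N \<omega>)) (r (N \<omega>))"
      using r[of "N \<omega>"] by simp
    then have "c (N \<omega>) \<in> cball 0 1"
      using c[of \<omega>] by blast
    then show ?thesis
      by simp
  qed
  have int_c: "integrable P (\<lambda>\<omega>. c (N \<omega>))"
    by (rule P.integrable_const_bound[where B=1]) (auto simp: c_norm)
  define E where "E = integral\<^sup>L P (\<lambda>\<omega>. c (N \<omega>))"
  have "ball E (p * r n0) \<subseteq> Theta \<P> K P"
  proof
    fix z
    assume "z \<in> ball E (p * r n0)"
    define w where "w = (1 / p) *\<^sub>R (z - E)"
    have "norm w < r n0"
      using \<open>z \<in> ball E (p * r n0)\<close> \<open>p > 0\<close>
      by (simp add: w_def dist_norm norm_minus_commute divide_less_eq mult.commute)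
    define Y where "Y \<omega> = c (N \<omega>) + indicator A \<omega> *\<^sub>R w" for \<omega>
    have [measurable]: "N \<in> borel \<rightarrow>\<^sub>M count_space UNIV" "A \<in> sets borel"
      using N A prob_measuresD(1)[OF P_prob] by simp_all
    have Y_borel: "Y \<in> borel_measurable borel"
      unfolding Y_def by measurable
    have "Y \<omega> \<in> ball (c (N \<omega>)) (r (N \<omega>))" for \<omega>
      using \<open>norm w < r n0\<close> r[of "N \<omega>"] prob_measuresD(2)[OF P_prob]
      by (auto simp: Y_def A_def dist_norm indicator_def)
    moreover have "ball (c (N \<omega>)) (r (N \<omega>)) \<subseteq> interior (dual_cone (K \<omega>))" for \<omega>
      using c[of \<omega>] by (intro interior_maximal) auto
    ultimately have "Y \<omega> \<in> interior (dual_cone (K \<omega>))" for \<omega>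
      by blast
    moreover have "norm (Y \<omega>) \<le> 1 + norm w" for \<omega>
    proof -
      have "norm (Y \<omega>) \<le> norm (c (N \<omega>)) + norm (indicator A \<omega> *\<^sub>R w)"
        unfolding Y_def by (rule norm_triangle_ineq)
      also have "\<dots> \<le> 1 + norm w"
        using c_norm[of \<omega>] by (intro add_mono) (auto simp: indicator_def)
      finally show ?thesis .
    qed
    then have "bounded (range Y)"
      unfolding bounded_iff by blast
    ultimately have Y: "Y \<in> Linf_int_dual K"
      unfolding Linf_int_dual_def using borel_measurable_imp_univ_measurable[OF Y_borel] by blast
    have "integral\<^sup>L (completion P) Y = integral\<^sup>L P Y"
      using Y_borel by (intro integral_completion) (simp only: measurable_prob_measures[OF P_prob])
    also have "\<dots> = E + p *\<^sub>R w"
      using int_c A unfolding Y_def E_def p_def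
      by (simp add: P.emeasure_eq_measure integrable_real_indicator)
    also have "\<dots> = z"
      using \<open>p > 0\<close> by (simp add: w_def)
    finally show "z \<in> Theta \<P> K P"
      using ThetaI[OF P_prob P_ac P_dom Y] by simp
  qed
  then have "ball E (p * r n0) \<subseteq> interior (Theta \<P> K P)"
    by (intro interior_maximal) auto
  moreover have "E \<in> ball E (p * r n0)"
    using \<open>p > 0\<close> r[of n0] by simp
  ultimately show ?thesis
    by blast
qed

theorem lemma3p2:
  fixes \<P> :: "('a::polish_space) measure set"
    and K :: "'a \<Rightarrow> (real ^ 'd) set"
    and P :: "'a measure"
  assumes P_ne: "\<P> \<noteq> {}"
    and P_convex: "convex_measures \<P>"
    and P_analytic: "analytic_measures \<P>"
    and K_closed: "\<And>\<omega>. closed (K \<omega>)"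
    and K_cone: "\<And>\<omega>. convex_cone (K \<omega>)"
    and K_orthant: "\<And>\<omega>. nonneg_orthant \<subseteq> K \<omega>"
    and K_meas: "borel_random_set K"
    and K_dual_bdry: "\<And>\<omega>. dual_cone (K \<omega>) \<inter> frontier nonneg_orthant = {0}"
    and K_dual_int: "\<And>\<omega>. interior (dual_cone (K \<omega>)) \<noteq> {}"
    and P_in: "P \<in> \<P>"
  shows "convex (Theta \<P> K P) \<and> interior (Theta \<P> K P) \<noteq> {}"
proof -
  have prob: "\<P> \<subseteq> prob_measures"
    using P_analytic unfolding analytic_measures_def by blast
  show ?thesis
    using Theta_convex[OF P_convex prob] Theta_interior_nonempty[OF P_in prob K_meas K_dual_int]
    by blast
qed

end
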